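(* Every $f=\sum\hat f_{\alpha,\beta;\omega}E_{\alpha,\beta}\star e_\omega\in\mathscr{F}_n(\mathbb{C}^d)$ defines, via formal evaluation $X\mapsto\mathrm{ev}_X(f)=\sum\hat f_{\alpha,\beta;\omega}\,E_{\alpha,\beta}\star e_\omega(X)$, a graded and direct sum-preserving function on $\bigsqcup_{m\ge1}\{X\in\mathbb{C}^{(mn\times mn)\cdot d}:\|X\|_{\mathrm{col}}<\frac1{\sqrt n}\}$.
   Context: Equip $\mathbb{C}^{n\times n}$ with the Hilbert–Schmidt inner product and let $\mathscr{F}_n(\mathbb{C}^d)=\bigoplus_{\ell\ge0}\mathbb{C}^{n\times n}\otimes(\mathbb{C}^d\otimes\mathbb{C}^{n\times n})^{\otimes\ell}$. With $E_{i,j}$ the matrix units of $\mathbb{C}^{n\times n}$ and $e_k$ the standard basis of $\mathbb{C}^d$, for words $\alpha=a_0\cdots a_\ell,\beta=b_0\cdots b_\ell$ in $\{1,\dots,n\}$ and $\omega=w_1\cdots w_\ell$ in $\{1,\dots,d\}$, $E_{\alpha,\beta}\star e_\omega=E_{a_0,b_0}\otimes e_{w_1}\otimes E_{a_1,b_1}\otimes\cdots\otimes e_{w_\ell}\otimes E_{a_\ell,b_\ell}$; these form an orthonormal basis, and $\hat f_{\alpha,\beta;\omega}$ are the coefficients of $f$ in it. For $X\in\mathbb{C}^{(mn\times mn)\cdot d}$ (column $d$-tuples of $mn\times mn$ matrices, $\|X\|_{\mathrm{col}}$ the operator norm of the stacked matrix), $E_{\alpha,\beta}\star e_\omega(X)=(I_m\otimes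 E_{a_0,b_0})X_{w_1}(I_m\otimes E_{a_1,b_1})\cdots X_{w_\ell}(I_m\otimes E_{a_\ell,b_\ell})$. Graded means $\mathrm{ev}_X(f)\in\mathbb{C}^{mn\times mn}$ for $X$ at level $mn$; direct sum-preserving means $\mathrm{ev}_{X\oplus X'}(f)=\mathrm{ev}_X(f)\oplus\mathrm{ev}_{X'}(f)$. *)

theory Defs
  imports "Jordan_Normal_Form.Matrix" "HOL-Analysis.Infinite_Sum"
begin

(* Indices are 0-based: matrix indices range over {..<n}, letters of omega over {..<d}. *)

(* Index set of the orthonormal basis E_{alpha,beta} * e_omega of F_n(C^d). *)
definition fock_index :: "nat \<Rightarrow> nat \<Rightarrow> (nat list \<times> nat list \<times> nat list) set" where
  "fock_index n d = {(a, b, w). length a = Suc (length w) \<and> length b = Suc (length w)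
     \<and> set a \<subseteq> {..<n} \<and> set b \<subseteq> {..<n} \<and> set w \<subseteq> {..<d}}"

definition level_index :: "nat \<Rightarrow> nat \<Rightarrow> nat \<Rightarrow> (nat list \<times> nat list \<times> nat list) set" where
  "level_index n d l = {(a, b, w) \<in> fock_index n d. length w = l}"

(* fhat are the coefficients of an element f of F_n(C^d): square summable over the basis *)
definition in_fock :: "nat \<Rightarrow> nat \<Rightarrow> (nat list \<Rightarrow> nat list \<Rightarrow> nat list \<Rightarrow> complex) \<Rightarrow> bool" where
  "in_fock n d fhat \<longleftrightarrow>
     (\<lambda>(a, b, w). (cmod (fhat a b w))\<^sup>2) summable_on fock_index n d"

(* I_m \<otimes> E_{a,b} as an (m n) x (m n) matrix; row index p*n + r *)
definition blockE :: "nat \<Rightarrow> nat \<Rightarrow> nat \<Rightarrow> nat \<Rightarrow> complex mat" where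
  "blockE m n a b = mat (m * n) (m * n)
     (\<lambda>(i, j). if i div n = j div n \<and> i mod n = a \<and> j mod n = b then 1 else 0)"

fun word_eval :: "nat \<Rightarrow> nat \<Rightarrow> nat list \<Rightarrow> nat list \<Rightarrow> nat list \<Rightarrow> complex mat list \<Rightarrow> complex mat" where
  "word_eval m n [a] [b] [] X = blockE m n a b"
| "word_eval m n (a # as) (b # bs) (w # ws) X = blockE m n a b * (X ! w) * word_eval m n as bs ws X"
| "word_eval m n _ _ _ X = 0\<^sub>m (m * n) (m * n)"

definition hom_part :: "nat \<Rightarrow> nat \<Rightarrow> nat \<Rightarrow> (nat list \<Rightarrow> nat list \<Rightarrow> nat list \<Rightarrow> complex)
     \<Rightarrow> complex mat list \<Rightarrow> nat \<Rightarrow> nat \<Rightarrow> nat \<Rightarrow> complex" where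
  "hom_part m n d fhat X l i j =
     (\<Sum>(a, b, w)\<in>level_index n d l. fhat a b w * (word_eval m n a b w X $$ (i, j)))"

definition ev :: "nat \<Rightarrow> nat \<Rightarrow> nat \<Rightarrow> (nat list \<Rightarrow> nat list \<Rightarrow> nat list \<Rightarrow> complex)
     \<Rightarrow> complex mat list \<Rightarrow> complex mat" where
  "ev m n d fhat X = mat (m * n) (m * n) (\<lambda>(i, j). \<Sum>l. hom_part m n d fhat X l i j)"

(* column operator norm of a d-tuple of N x N matrices (norm of the stacked dN x N matrix) *)
definition col_norm :: "nat \<Rightarrow> complex mat list \<Rightarrow> real" where
  "col_norm N X = Sup {sqrt (\<Sum>k<length X. \<Sum>i<N. (cmod ((X ! k *\<^sub>v v) $ i))\<^sup>2) | v.
      v \<in> carrier_vec N \<and> (\<Sum>i<N. (cmod (v $ i))\<^sup>2) \<le> 1}"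

definition dom_level :: "nat \<Rightarrow> nat \<Rightarrow> nat \<Rightarrow> complex mat list set" where
  "dom_level m n d = {X. length X = d \<and> (\<forall>k<d. X ! k \<in> carrier_mat (m * n) (m * n))
      \<and> col_norm (m * n) X < 1 / sqrt (real n)}"

definition tuple_dsum :: "nat \<Rightarrow> nat \<Rightarrow> complex mat list \<Rightarrow> complex mat list \<Rightarrow> complex mat list" where
  "tuple_dsum N N' X X' = map (\<lambda>k. four_block_mat (X ! k) (0\<^sub>m N N') (0\<^sub>m N' N) (X' ! k)) [0..<length X]"

end

theory Submission
  imports Defs "HOL-Analysis.L2_Norm"
begin

(* Write c for the column norm of X. Since the I_m \<otimes> E_{a,b} with b < n split a vector into n
   pieces of total squared norm \<parallel>y\<parallel>^2, and \<Sum>_k \<parallel>X_k y\<parallel>^2 \<le> c^2 \<parallel>y\<parallel>^2, induction on the length l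
   shows that the j-th columns of all words E_{\<alpha>,\<beta>} \<star> e_\<omega>(X) of length l have squared norms
   summing to at most n (n c^2)^l. By Cauchy-Schwarz the (i,j) entry of the degree-l part of
   ev_X(f) is then at most \<parallel>f\<parallel> sqrt n (sqrt n c)^l, a geometric series because c < 1/sqrt n.
   Direct sums are respected because I_{m+m'} \<otimes> E_{a,b} is the direct sum of I_m \<otimes> E_{a,b} and
   I_{m'} \<otimes> E_{a,b}, so every word evaluates block-diagonally on X \<oplus> X', while
   \<parallel>X \<oplus> X'\<parallel>_col \<le> max \<parallel>X\<parallel>_col \<parallel>X'\<parallel>_col keeps X \<oplus> X' in the domain. *)

section \<open>Squared norms and the column norm\<close>

lemma sum_lessThan_add: "(\<Sum>i<N + k. g i) = (\<Sum>i<N. g i) + (\<Sum>r<k. g (N + r))"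
  for N k :: nat
  by (induct k) (auto simp: ac_simps)

lemma sum_lessThan_mult: "(\<Sum>i<m * n. g i) = (\<Sum>p<m. \<Sum>r<n. g (p * n + r))"
  for m n :: nat
proof (induct m)
  case (Suc m)
  have "(\<Sum>i<Suc m * n. g i) = (\<Sum>i<m * n + n. g i)"
    by (simp add: add.commute)
  also have "\<dots> = (\<Sum>i<m * n. g i) + (\<Sum>r<n. g (m * n + r))"
    by (rule sum_lessThan_add)
  also have "\<dots> = (\<Sum>p<Suc m. \<Sum>r<n. g (p * n + r))"
    using Suc by simp
  finally show ?case .
qed simp

lemma col_eq_mult_unit_vec:
  fixes A :: "'a :: semiring_1 mat"
  assumes "A \<in> carrier_mat nr nc" and "j < nc"
  shows "col A j = A *\<^sub>v unit_vec nc j"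
proof -
  have "col A j = col (A * 1\<^sub>m nc) j" using assms(1) by (simp only: right_mult_one_mat)
  also have "\<dots> = A *\<^sub>v col (1\<^sub>m nc) j" by (rule col_mult2[OF assms(1) one_carrier_mat assms(2)])
  also have "\<dots> = A *\<^sub>v unit_vec nc j" using assms(2) by simp
  finally show ?thesis .
qed

lemma nth_mem_carrier_mat: "set X \<subseteq> carrier_mat N N \<Longrightarrow> k < length X \<Longrightarrow> X ! k \<in> carrier_mat N N"
  using nth_mem by blast

definition vec_sq_norm :: "nat \<Rightarrow> complex vec \<Rightarrow> real" where
  "vec_sq_norm N v = (\<Sum>i<N. (cmod (v $ i))\<^sup>2)"

lemma vec_sq_norm_nonneg: "vec_sq_norm N v \<ge> 0"
  unfolding vec_sq_norm_def by (auto intro: sum_nonneg)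

lemma entry_sq_le_vec_sq_norm: "i < N \<Longrightarrow> (cmod (v $ i))\<^sup>2 \<le> vec_sq_norm N v"
  unfolding vec_sq_norm_def by (intro member_le_sum) auto

lemma vec_sq_norm_smult:
  "v \<in> carrier_vec N \<Longrightarrow> vec_sq_norm N (r \<cdot>\<^sub>v v) = (cmod r)\<^sup>2 * vec_sq_norm N v"
  unfolding vec_sq_norm_def by (auto simp: sum_distrib_left norm_mult power_mult_distrib)

lemma vec_sq_norm_eq_0:
  assumes "v \<in> carrier_vec N" and "vec_sq_norm N v = 0"
  shows "v = 0\<^sub>v N"
proof (rule eq_vecI)
  fix i assume "i < dim_vec (0\<^sub>v N :: complex vec)"
  then have "i < N" by simp
  with assms(2) entry_sq_le_vec_sq_norm[of i N v] show "v $ i = 0\<^sub>v N $ i" by simp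
qed (use assms in simp)

lemma vec_sq_norm_unit_vec: "j < N \<Longrightarrow> vec_sq_norm N (unit_vec N j) = 1"
  unfolding vec_sq_norm_def by (simp add: if_distrib[of "\<lambda>x. (cmod x)\<^sup>2"] cong: if_cong)

lemma vec_sq_norm_append:
  "v \<in> carrier_vec N \<Longrightarrow> w \<in> carrier_vec N' \<Longrightarrow>
    vec_sq_norm (N + N') (v @\<^sub>v w) = vec_sq_norm N v + vec_sq_norm N' w"
  unfolding vec_sq_norm_def sum_lessThan_add by (auto intro!: sum.cong)

lemma mult_mat_vec_entry_le:
  assumes "A \<in> carrier_mat N N" and "v \<in> carrier_vec N" and "vec_sq_norm N v \<le> 1" and "i < N"
  shows "cmod ((A *\<^sub>v v) $ i) \<le> (\<Sum>j<N. cmod (A $$ (i, j)))"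
proof -
  have "cmod ((A *\<^sub>v v) $ i) = cmod (\<Sum>j<N. A $$ (i, j) * v $ j)"
    using assms by (simp add: scalar_prod_def row_def atLeast0LessThan)
  also have "\<dots> \<le> (\<Sum>j<N. cmod (A $$ (i, j)) * cmod (v $ j))"
    by (rule order_trans[OF norm_sum]) (simp add: norm_mult)
  also have "\<dots> \<le> (\<Sum>j<N. cmod (A $$ (i, j)))"
  proof (rule sum_mono)
    fix j assume "j \<in> {..<N}"
    then have "(cmod (v $ j))\<^sup>2 \<le> 1"
      using entry_sq_le_vec_sq_norm[of j N v] assms(3) by simp
    then show "cmod (A $$ (i, j)) * cmod (v $ j) \<le> cmod (A $$ (i, j))"
      by (simp add: power_le_one_iff mult_left_le)
  qed
  finally show ?thesis .
qed

lemma col_norm_eq: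
  "col_norm N X = Sup {sqrt (\<Sum>k<length X. vec_sq_norm N (X ! k *\<^sub>v v)) | v.
      v \<in> carrier_vec N \<and> vec_sq_norm N v \<le> 1}"
  unfolding col_norm_def vec_sq_norm_def ..

lemma col_norm_ge:
  assumes X: "set X \<subseteq> carrier_mat N N" and "v \<in> carrier_vec N" and "vec_sq_norm N v \<le> 1"
  shows "sqrt (\<Sum>k<length X. vec_sq_norm N (X ! k *\<^sub>v v)) \<le> col_norm N X"
  unfolding col_norm_eq
proof (rule cSup_upper)
  let ?B = "sqrt (\<Sum>k<length X. \<Sum>i<N. (\<Sum>j<N. cmod (X ! k $$ (i, j)))\<^sup>2)"
  show "bdd_above {sqrt (\<Sum>k<length X. vec_sq_norm N (X ! k *\<^sub>v v)) | v.
      v \<in> carrier_vec N \<and> vec_sq_norm N v \<le> 1}"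
  proof (rule bdd_aboveI[where M = ?B], clarify)
    fix u assume u: "u \<in> carrier_vec N" "vec_sq_norm N u \<le> 1"
    have "vec_sq_norm N (X ! k *\<^sub>v u) \<le> (\<Sum>i<N. (\<Sum>j<N. cmod (X ! k $$ (i, j)))\<^sup>2)"
      if "k < length X" for k
      unfolding vec_sq_norm_def
    proof (rule sum_mono)
      fix i assume "i \<in> {..<N}"
      then show "(cmod ((X ! k *\<^sub>v u) $ i))\<^sup>2 \<le> (\<Sum>j<N. cmod (X ! k $$ (i, j)))\<^sup>2"
        using mult_mat_vec_entry_le[OF nth_mem_carrier_mat[OF X that] u] by (intro power_mono) simp_all
    qed
    then show "sqrt (\<Sum>k<length X. vec_sq_norm N (X ! k *\<^sub>v u)) \<le> ?B"
      by (intro real_sqrt_le_mono sum_mono) simp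
  qed
qed (use assms(2,3) in auto)

lemma col_norm_le:
  assumes "\<And>v. v \<in> carrier_vec N \<Longrightarrow> vec_sq_norm N v \<le> 1 \<Longrightarrow>
             sqrt (\<Sum>k<length X. vec_sq_norm N (X ! k *\<^sub>v v)) \<le> M"
  shows "col_norm N X \<le> M"
  unfolding col_norm_eq
proof (rule cSup_least)
  show "{sqrt (\<Sum>k<length X. vec_sq_norm N (X ! k *\<^sub>v v)) | v.
      v \<in> carrier_vec N \<and> vec_sq_norm N v \<le> 1} \<noteq> {}"
    by (auto intro!: exI[of _ "0\<^sub>v N"] simp: vec_sq_norm_def)
qed (use assms in auto)

lemma col_norm_nonneg:
  assumes "set X \<subseteq> carrier_mat N N"
  shows "col_norm N X \<ge> 0"
  by (rule order_trans[OF _ col_norm_ge[OF assms zero_carrier_vec]])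
     (auto simp: vec_sq_norm_def intro!: sum_nonneg)

lemma sum_vec_sq_norm_mult_vec_le:
  assumes X: "set X \<subseteq> carrier_mat N N" and y: "y \<in> carrier_vec N"
  shows "(\<Sum>k<length X. vec_sq_norm N (X ! k *\<^sub>v y)) \<le> (col_norm N X)\<^sup>2 * vec_sq_norm N y"
proof (cases "vec_sq_norm N y = 0")
  case True
  have "X ! k *\<^sub>v y = 0\<^sub>v N" if "k < length X" for k
    using nth_mem_carrier_mat[OF X that] vec_sq_norm_eq_0[OF y True] by (intro eq_vecI) simp_all
  then have "(\<Sum>k<length X. vec_sq_norm N (X ! k *\<^sub>v y)) = 0"
    by (simp add: vec_sq_norm_def)
  then show ?thesis by (simp add: vec_sq_norm_nonneg)
next
  case False
  define c where "c = complex_of_real (inverse (sqrt (vec_sq_norm N y)))"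
  have c2: "(cmod c)\<^sup>2 = inverse (vec_sq_norm N y)"
    using vec_sq_norm_nonneg[of N y] by (simp add: c_def norm_inverse power_inverse)
  define v where "v = c \<cdot>\<^sub>v y"
  have v: "v \<in> carrier_vec N" using y by (simp add: v_def)
  have "vec_sq_norm N v = 1"
    using False y by (simp add: v_def vec_sq_norm_smult c2)
  then have "sqrt (\<Sum>k<length X. vec_sq_norm N (X ! k *\<^sub>v v)) \<le> col_norm N X"
    by (intro col_norm_ge[OF X v]) simp
  then have "(\<Sum>k<length X. vec_sq_norm N (X ! k *\<^sub>v v)) \<le> (col_norm N X)\<^sup>2"
    by (rule sqrt_le_D)
  moreover have "vec_sq_norm N (X ! k *\<^sub>v v) = (cmod c)\<^sup>2 * vec_sq_norm N (X ! k *\<^sub>v y)"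
    if "k < length X" for k
  proof -
    note Xk = nth_mem_carrier_mat[OF X that]
    then have "X ! k *\<^sub>v v = c \<cdot>\<^sub>v (X ! k *\<^sub>v y)"
      using y by (simp add: v_def mult_mat_vec)
    with Xk y show ?thesis by (simp only: vec_sq_norm_smult mult_mat_vec_carrier)
  qed
  ultimately have "inverse (vec_sq_norm N y) * (\<Sum>k<length X. vec_sq_norm N (X ! k *\<^sub>v y))
      \<le> (col_norm N X)\<^sup>2"
    by (simp add: sum_distrib_left c2)
  then show ?thesis
    using False vec_sq_norm_nonneg[of N y] by (simp add: field_simps)
qed

section \<open>The matrices I_m \<otimes> E_{a,b} and words in them\<close>

lemma mult_add_less_mult: "p < m \<Longrightarrow> r < n \<Longrightarrow> p * n + r < m * n"
  for p m r n :: nat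
proof -
  assume "p < m" and "r < n"
  then have "p * n + r < Suc p * n" by simp
  also have "\<dots> \<le> m * n" using \<open>p < m\<close> by (intro mult_right_mono) simp_all
  finally show ?thesis .
qed

lemma blockE_carrier [simp]: "blockE m n a b \<in> carrier_mat (m * n) (m * n)"
  unfolding blockE_def by simp

lemma dim_blockE:
  "dim_row (blockE m n a b) = m * n" "dim_col (blockE m n a b) = m * n"
  unfolding blockE_def by simp_all

lemma index_blockE:
  "i < m * n \<Longrightarrow> j < m * n \<Longrightarrow>
    blockE m n a b $$ (i, j) = (if i div n = j div n \<and> i mod n = a \<and> j mod n = b then 1 else 0)"
  unfolding blockE_def by simp

lemma blockE_mult_vec_index:
  assumes y: "y \<in> carrier_vec (m * n)" and i: "i < m * n" and b: "b < n"
  shows "(blockE m n a b *\<^sub>v y) $ i = (if i mod n = a then y $ (i div n * n + b) else 0)"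
proof -
  have same_block: "(i div n = j div n \<and> j mod n = b) \<longleftrightarrow> j = i div n * n + b" for j
  proof
    assume "i div n = j div n \<and> j mod n = b"
    then show "j = i div n * n + b" by (metis div_mult_mod_eq)
  qed (use b in simp)
  have "(blockE m n a b *\<^sub>v y) $ i
      = (\<Sum>j<m * n. (if i div n = j div n \<and> i mod n = a \<and> j mod n = b then 1 else 0) * y $ j)"
    using y i by (simp add: blockE_def scalar_prod_def row_def atLeast0LessThan)
  also have "\<dots> = (\<Sum>j<m * n. if j = i div n * n + b then (if i mod n = a then y $ j else 0) else 0)"
    by (rule sum.cong) (auto simp flip: same_block)
  also have "\<dots> = (if i mod n = a then y $ (i div n * n + b) else 0)"
    using mult_add_less_mult[OF _ b, of "i div n" m] i by (simp add: less_mult_imp_div_less)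
  finally show ?thesis .
qed

lemma sum_vec_sq_norm_blockE_mult_vec:
  assumes y: "y \<in> carrier_vec (m * n)" and a: "a < n"
  shows "(\<Sum>b<n. vec_sq_norm (m * n) (blockE m n a b *\<^sub>v y)) = vec_sq_norm (m * n) y"
proof -
  have "vec_sq_norm (m * n) (blockE m n a b *\<^sub>v y) = (\<Sum>p<m. (cmod (y $ (p * n + b)))\<^sup>2)"
    if b: "b < n" for b
  proof -
    have "vec_sq_norm (m * n) (blockE m n a b *\<^sub>v y)
        = (\<Sum>p<m. \<Sum>r<n. if r = a then (cmod (y $ (p * n + b)))\<^sup>2 else 0)"
      unfolding vec_sq_norm_def sum_lessThan_mult
      using y b by (intro sum.cong refl) (simp add: blockE_mult_vec_index mult_add_less_mult)
    also have "\<dots> = (\<Sum>p<m. (cmod (y $ (p * n + b)))\<^sup>2)"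
      using a by simp
    finally show ?thesis .
  qed
  then have "(\<Sum>b<n. vec_sq_norm (m * n) (blockE m n a b *\<^sub>v y))
      = (\<Sum>b<n. \<Sum>p<m. (cmod (y $ (p * n + b)))\<^sup>2)"
    by simp
  also have "\<dots> = vec_sq_norm (m * n) y"
    unfolding vec_sq_norm_def sum_lessThan_mult by (rule sum.swap)
  finally show ?thesis .
qed

lemma level_index_letters: "(a, b, w) \<in> level_index n d l \<Longrightarrow> set w \<subseteq> {..<d}"
  by (simp add: level_index_def fock_index_def)

lemma level_index_0: "level_index n d 0 = (\<lambda>(a, b). ([a], [b], [])) ` ({..<n} \<times> {..<n})"
  unfolding level_index_def fock_index_def by (fastforce simp: length_Suc_conv image_iff)

lemma level_index_Suc:
  "level_index n d (Suc l) = (\<lambda>((as, bs, ws), w, a, b). (a # as, b # bs, w # ws)) `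
     (level_index n d l \<times> {..<d} \<times> {..<n} \<times> {..<n})"
  unfolding level_index_def fock_index_def by (fastforce simp: length_Suc_conv image_iff)

lemma finite_level_index: "finite (level_index n d l)"
  by (induct l) (simp_all add: level_index_0 level_index_Suc)

lemma sum_level_index_0: "(\<Sum>t\<in>level_index n d 0. g t) = (\<Sum>a<n. \<Sum>b<n. g ([a], [b], []))"
proof -
  have "inj_on (\<lambda>(a, b). ([a], [b], [] :: nat list)) ({..<n} \<times> {..<n})"
    by (auto simp: inj_on_def)
  then show ?thesis
    unfolding level_index_0 by (simp add: sum.reindex sum.cartesian_product' split_def)
qed

lemma sum_level_index_Suc:
  "(\<Sum>t\<in>level_index n d (Suc l). g t) =
    (\<Sum>(as, bs, ws)\<in>level_index n d l. \<Sum>w<d. \<Sum>a<n. \<Sum>b<n. g (a # as, b # bs, w # ws))"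
proof -
  have "inj_on (\<lambda>((as, bs, ws), w, a, b). (a # as, b # bs, w # ws))
      (level_index n d l \<times> {..<d} \<times> {..<n} \<times> {..<n})"
    by (auto simp: inj_on_def)
  then show ?thesis
    unfolding level_index_Suc by (simp add: sum.reindex sum.cartesian_product' split_def)
qed

lemma word_eval_carrier:
  assumes "set X \<subseteq> carrier_mat (m * n) (m * n)" and "set w \<subseteq> {..<length X}"
  shows "word_eval m n a b w X \<in> carrier_mat (m * n) (m * n)"
  using assms
  by (induction m n a b w X rule: word_eval.induct) (auto intro!: mult_carrier_mat nth_mem_carrier_mat)

lemma col_word_eval_Cons:
  assumes X: "set X \<subseteq> carrier_mat (m * n) (m * n)" and w: "set (w # ws) \<subseteq> {..<length X}"
    and j: "j < m * n"
  shows "col (word_eval m n (a # as) (b # bs) (w # ws) X) j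
       = blockE m n a b *\<^sub>v (X ! w *\<^sub>v col (word_eval m n as bs ws X) j)"
proof -
  have Xw: "X ! w \<in> carrier_mat (m * n) (m * n)"
    and W: "word_eval m n as bs ws X \<in> carrier_mat (m * n) (m * n)"
    using w by (auto intro: nth_mem_carrier_mat[OF X] word_eval_carrier[OF X])
  have "col (blockE m n a b * X ! w * word_eval m n as bs ws X) j
      = (blockE m n a b * X ! w) *\<^sub>v col (word_eval m n as bs ws X) j"
    by (rule col_mult2[OF mult_carrier_mat[OF blockE_carrier Xw] W j])
  also have "\<dots> = blockE m n a b *\<^sub>v (X ! w *\<^sub>v col (word_eval m n as bs ws X) j)"
    using Xw W j by (intro assoc_mult_mat_vec[OF blockE_carrier Xw]) simp
  finally show ?thesis by simp
qed

lemma sum_vec_sq_norm_col_word_eval_Cons: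
  assumes X: "set X \<subseteq> carrier_mat (m * n) (m * n)" and w: "set (w # ws) \<subseteq> {..<length X}"
    and j: "j < m * n"
  shows "(\<Sum>a<n. \<Sum>b<n. vec_sq_norm (m * n) (col (word_eval m n (a # as) (b # bs) (w # ws) X) j))
       = n * vec_sq_norm (m * n) (X ! w *\<^sub>v col (word_eval m n as bs ws X) j)"
proof -
  have "X ! w \<in> carrier_mat (m * n) (m * n)" and "word_eval m n as bs ws X \<in> carrier_mat (m * n) (m * n)"
    using w by (simp_all add: nth_mem_carrier_mat[OF X] word_eval_carrier[OF X])
  then have "X ! w *\<^sub>v col (word_eval m n as bs ws X) j \<in> carrier_vec (m * n)"
    using j by simp
  then show ?thesis
    by (simp add: col_word_eval_Cons[OF X w j] sum_vec_sq_norm_blockE_mult_vec del: word_eval.simps)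
qed

lemma sum_vec_sq_norm_col_word_eval_le:
  assumes d: "length X = d" and X: "set X \<subseteq> carrier_mat (m * n) (m * n)" and j: "j < m * n"
  shows "(\<Sum>(a, b, w)\<in>level_index n d l. vec_sq_norm (m * n) (col (word_eval m n a b w X) j))
     \<le> n * (n * (col_norm (m * n) X)\<^sup>2) ^ l"
proof (induction l)
  case 0
  have "(\<Sum>(a, b, w)\<in>level_index n d 0. vec_sq_norm (m * n) (col (word_eval m n a b w X) j))
      = (\<Sum>a<n. \<Sum>b<n. vec_sq_norm (m * n) (blockE m n a b *\<^sub>v unit_vec (m * n) j))"
    using j by (simp add: sum_level_index_0 col_eq_mult_unit_vec[OF blockE_carrier])
  also have "\<dots> = n"
    using j by (simp add: sum_vec_sq_norm_blockE_mult_vec vec_sq_norm_unit_vec)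
  finally show ?case by simp
next
  case (Suc l)
  let ?c = "col_norm (m * n) X"
  let ?y = "\<lambda>as bs ws. col (word_eval m n as bs ws X) j"
  have y: "?y as bs ws \<in> carrier_vec (m * n)" if "(as, bs, ws) \<in> level_index n d l" for as bs ws
    using that j word_eval_carrier[OF X] level_index_letters d by fastforce
  have "(\<Sum>w<d. \<Sum>a<n. \<Sum>b<n. vec_sq_norm (m * n) (col (word_eval m n (a # as) (b # bs) (w # ws) X) j))
      = n * (\<Sum>w<d. vec_sq_norm (m * n) (X ! w *\<^sub>v ?y as bs ws))"
    if "(as, bs, ws) \<in> level_index n d l" for as bs ws
    unfolding sum_distrib_left
  proof (rule sum.cong[OF refl])
    fix w assume "w \<in> {..<d}"
    then show "(\<Sum>a<n. \<Sum>b<n. vec_sq_norm (m * n) (col (word_eval m n (a # as) (b # bs) (w # ws) X) j))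
        = n * vec_sq_norm (m * n) (X ! w *\<^sub>v ?y as bs ws)"
      using level_index_letters[OF that] d by (intro sum_vec_sq_norm_col_word_eval_Cons[OF X _ j]) auto
  qed
  then have "(\<Sum>(a, b, w)\<in>level_index n d (Suc l). vec_sq_norm (m * n) (col (word_eval m n a b w X) j))
      = (\<Sum>(as, bs, ws)\<in>level_index n d l. n * (\<Sum>w<d. vec_sq_norm (m * n) (X ! w *\<^sub>v ?y as bs ws)))"
    unfolding sum_level_index_Suc by (intro sum.cong refl) (auto simp del: word_eval.simps)
  also have "\<dots> \<le> (\<Sum>(as, bs, ws)\<in>level_index n d l. n * (?c\<^sup>2 * vec_sq_norm (m * n) (?y as bs ws)))"
  proof (rule sum_mono, clarify)
    fix as bs ws assume "(as, bs, ws) \<in> level_index n d l"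
    then show "n * (\<Sum>w<d. vec_sq_norm (m * n) (X ! w *\<^sub>v ?y as bs ws))
        \<le> n * (?c\<^sup>2 * vec_sq_norm (m * n) (?y as bs ws))"
      using sum_vec_sq_norm_mult_vec_le[OF X y] d by (intro mult_left_mono) auto
  qed
  also have "\<dots> = n * ?c\<^sup>2 * (\<Sum>(as, bs, ws)\<in>level_index n d l. vec_sq_norm (m * n) (?y as bs ws))"
    by (simp add: sum_distrib_left split_def mult.assoc)
  also have "\<dots> \<le> n * ?c\<^sup>2 * (n * (n * ?c\<^sup>2) ^ l)"
    using Suc.IH by (intro mult_left_mono) auto
  also have "\<dots> = n * (n * ?c\<^sup>2) ^ Suc l"
    by (simp add: algebra_simps)
  finally show ?case .
qed

section \<open>Convergence of the formal evaluation\<close>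

definition fock_norm :: "nat \<Rightarrow> nat \<Rightarrow> (nat list \<Rightarrow> nat list \<Rightarrow> nat list \<Rightarrow> complex) \<Rightarrow> real" where
  "fock_norm n d fhat = sqrt (infsum (\<lambda>(a, b, w). (cmod (fhat a b w))\<^sup>2) (fock_index n d))"

lemma fock_norm_nonneg: "fock_norm n d fhat \<ge> 0"
  unfolding fock_norm_def by (simp add: infsum_nonneg split_def)

lemma fock_norm_sq:
  "(fock_norm n d fhat)\<^sup>2 = infsum (\<lambda>(a, b, w). (cmod (fhat a b w))\<^sup>2) (fock_index n d)"
  using fock_norm_nonneg[of n d fhat] by (simp add: fock_norm_def)

lemma sum_level_index_le_fock_norm:
  assumes "in_fock n d fhat"
  shows "(\<Sum>(a, b, w)\<in>level_index n d l. (cmod (fhat a b w))\<^sup>2) \<le> (fock_norm n d fhat)\<^sup>2"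
  unfolding fock_norm_sq
  using assms finite_level_index unfolding in_fock_def
  by (intro finite_sum_le_infsum) (auto simp: level_index_def)

lemma norm_hom_part_le:
  assumes f: "in_fock n d fhat" and d: "length X = d" and X: "set X \<subseteq> carrier_mat (m * n) (m * n)"
    and i: "i < m * n" and j: "j < m * n"
  shows "cmod (hom_part m n d fhat X l i j)
     \<le> fock_norm n d fhat * (sqrt n * (sqrt n * col_norm (m * n) X) ^ l)"
proof -
  let ?L = "level_index n d l"
  define F where "F = (\<lambda>(a, b, w). cmod (fhat a b w))"
  define G where "G = (\<lambda>(a, b, w). cmod (word_eval m n a b w X $$ (i, j)))"
  have "cmod (hom_part m n d fhat X l i j) \<le> (\<Sum>t\<in>?L. \<bar>F t\<bar> * \<bar>G t\<bar>)"
    unfolding hom_part_def F_def G_def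
    by (rule order_trans[OF norm_sum]) (simp add: norm_mult split_def)
  also have "\<dots> \<le> L2_set F ?L * L2_set G ?L"
    by (rule L2_set_mult_ineq)
  also have "\<dots> \<le> fock_norm n d fhat * sqrt (n * (n * (col_norm (m * n) X)\<^sup>2) ^ l)"
  proof (rule mult_mono)
    show "L2_set F ?L \<le> fock_norm n d fhat"
      unfolding L2_set_def F_def
      by (rule real_le_lsqrt[OF fock_norm_nonneg])
         (use sum_level_index_le_fock_norm[OF f, of l] in \<open>simp add: split_def\<close>)
    have "(G t)\<^sup>2 \<le> vec_sq_norm (m * n) (col (word_eval m n a b w X) j)"
      if "t = (a, b, w)" "t \<in> ?L" for t a b w
    proof -
      have "word_eval m n a b w X \<in> carrier_mat (m * n) (m * n)"
        using level_index_letters[of a b w n d l] that d by (intro word_eval_carrier[OF X]) auto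
      then show ?thesis
        using that i j entry_sq_le_vec_sq_norm[OF i, of "col (word_eval m n a b w X) j"]
        by (simp add: G_def)
    qed
    then have "(\<Sum>t\<in>?L. (G t)\<^sup>2)
        \<le> (\<Sum>(a, b, w)\<in>?L. vec_sq_norm (m * n) (col (word_eval m n a b w X) j))"
      by (intro sum_mono) auto
    also have "\<dots> \<le> n * (n * (col_norm (m * n) X)\<^sup>2) ^ l"
      by (rule sum_vec_sq_norm_col_word_eval_le[OF d X j])
    finally show "L2_set G ?L \<le> sqrt (n * (n * (col_norm (m * n) X)\<^sup>2) ^ l)"
      unfolding L2_set_def by simp
  qed (simp_all add: L2_set_nonneg fock_norm_nonneg)
  also have "sqrt (n * (n * (col_norm (m * n) X)\<^sup>2) ^ l) = sqrt n * (sqrt n * col_norm (m * n) X) ^ l"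
    using col_norm_nonneg[OF X] by (simp add: real_sqrt_mult real_sqrt_power)
  finally show ?thesis .
qed

lemma summable_hom_part:
  assumes f: "in_fock n d fhat" and d: "length X = d" and X: "set X \<subseteq> carrier_mat (m * n) (m * n)"
    and small: "col_norm (m * n) X < 1 / sqrt n" and i: "i < m * n" and j: "j < m * n"
  shows "summable (\<lambda>l. hom_part m n d fhat X l i j)"
proof (rule summable_comparison_test')
  let ?q = "sqrt n * col_norm (m * n) X"
  have "n > 0" using i by (cases n) auto
  then have "?q < 1" using small by (simp add: field_simps)
  moreover have "?q \<ge> 0" using col_norm_nonneg[OF X] by simp
  ultimately show "summable (\<lambda>l. fock_norm n d fhat * (sqrt n * ?q ^ l))"
    by (intro summable_mult summable_geometric) simp
  show "norm (hom_part m n d fhat X l i j) \<le> fock_norm n d fhat * (sqrt n * ?q ^ l)" for l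
    using norm_hom_part_le[OF f d X i j] by simp
qed

section \<open>Direct sums\<close>

abbreviation mat_dsum :: "'a :: zero mat \<Rightarrow> 'a mat \<Rightarrow> nat \<Rightarrow> nat \<Rightarrow> 'a mat" where
  "mat_dsum A B N N' \<equiv> four_block_mat A (0\<^sub>m N N') (0\<^sub>m N' N) B"

lemma mult_mat_dsum:
  fixes A A' :: "'a :: semiring_0 mat"
  assumes A: "A \<in> carrier_mat N N" and A': "A' \<in> carrier_mat N N"
    and B: "B \<in> carrier_mat N' N'" and B': "B' \<in> carrier_mat N' N'"
  shows "mat_dsum A B N N' * mat_dsum A' B' N N' = mat_dsum (A * A') (B * B') N N'"
  using assms
  by (subst mult_four_block_mat[OF A zero_carrier_mat zero_carrier_mat B A' zero_carrier_mat
        zero_carrier_mat B']) auto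

lemma zero_mat_dsum: "mat_dsum (0\<^sub>m N N) (0\<^sub>m N' N') N N' = (0\<^sub>m (N + N') (N + N') :: 'a :: zero mat)"
  by (rule eq_matI) auto

lemma blockE_add:
  "blockE (m + m') n a b = mat_dsum (blockE m n a b) (blockE m' n a b) (m * n) (m' * n)"
proof (rule eq_matI)
  fix i j
  assume "i < dim_row (mat_dsum (blockE m n a b) (blockE m' n a b) (m * n) (m' * n))"
    and "j < dim_col (mat_dsum (blockE m n a b) (blockE m' n a b) (m * n) (m' * n))"
  then have i: "i < m * n + m' * n" and j: "j < m * n + m' * n" by (simp_all add: dim_blockE)
  have n: "n > 0" using i by (cases n) auto
  have shift: "p div n = m + (p - m * n) div n" "p mod n = (p - m * n) mod n" if mp: "m * n \<le> p" for p
  proof -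
    from mp obtain r where "p = m * n + r" by (metis le_add_diff_inverse)
    then show "p div n = m + (p - m * n) div n" "p mod n = (p - m * n) mod n" using n by simp_all
  qed
  have low: "p div n < m" if "p < m * n" for p
    using that by (simp add: less_mult_imp_div_less)
  have whole: "blockE (m + m') n a b $$ (i, j)
      = (if i div n = j div n \<and> i mod n = a \<and> j mod n = b then 1 else 0)"
    using i j by (intro index_blockE) (simp_all add: distrib_right)
  consider "i < m * n" "j < m * n" | "m * n \<le> i" "m * n \<le> j"
    | "i < m * n \<and> m * n \<le> j \<or> m * n \<le> i \<and> j < m * n"
    by linarith
  then show "blockE (m + m') n a b $$ (i, j)
      = mat_dsum (blockE m n a b) (blockE m' n a b) (m * n) (m' * n) $$ (i, j)"
  proof cases
    case 1
    then show ?thesis using i j by (simp add: whole index_blockE dim_blockE)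
  next
    case 2
    moreover have "i - m * n < m' * n" and "j - m * n < m' * n" using 2 i j by linarith+
    ultimately show ?thesis using i j by (simp add: whole index_blockE dim_blockE shift)
  next
    case 3
    then have "i div n \<noteq> j div n" using low shift(1) by fastforce
    then show ?thesis using 3 i j by (auto simp: whole dim_blockE)
  qed
qed (simp_all add: dim_blockE distrib_right)

lemma length_tuple_dsum [simp]: "length (tuple_dsum N N' X X') = length X"
  unfolding tuple_dsum_def by simp

lemma nth_tuple_dsum [simp]:
  "k < length X \<Longrightarrow> tuple_dsum N N' X X' ! k = mat_dsum (X ! k) (X' ! k) N N'"
  unfolding tuple_dsum_def by simp

lemma set_tuple_dsum_carrier:
  assumes "length X' = length X" and "set X \<subseteq> carrier_mat N N" and "set X' \<subseteq> carrier_mat N' N'"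
  shows "set (tuple_dsum N N' X X') \<subseteq> carrier_mat (N + N') (N + N')"
  using assms unfolding tuple_dsum_def
  by (auto intro!: four_block_carrier_mat nth_mem_carrier_mat)

lemma word_eval_tuple_dsum:
  assumes d: "length X' = length X"
    and X: "set X \<subseteq> carrier_mat (m * n) (m * n)" and X': "set X' \<subseteq> carrier_mat (m' * n) (m' * n)"
  shows "set w \<subseteq> {..<length X} \<Longrightarrow>
    word_eval (m + m') n a b w (tuple_dsum (m * n) (m' * n) X X')
      = mat_dsum (word_eval m n a b w X) (word_eval m' n a b w X') (m * n) (m' * n)"
proof (induction w arbitrary: a b)
  case Nil
  consider x y where "a = [x]" "b = [y]" | "\<forall>x y. a \<noteq> [x] \<or> b \<noteq> [y]"
    by blast
  then show ?case
  proof cases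
    case 1
    then show ?thesis by (simp add: blockE_add)
  next
    case 2
    then have "word_eval k n a b [] Z = 0\<^sub>m (k * n) (k * n)" for k Z
      by (cases "(k, n, a, b, [] :: nat list, Z)" rule: word_eval.cases) auto
    then show ?thesis by (simp add: zero_mat_dsum distrib_right)
  qed
next
  case (Cons w ws)
  then have w: "w < length X" and ws: "set ws \<subseteq> {..<length X}" by simp_all
  consider x as y bs where "a = x # as" "b = y # bs" | "a = [] \<or> b = []"
    by (cases a; cases b) auto
  then show ?case
  proof cases
    case 1
    have Xw: "X ! w \<in> carrier_mat (m * n) (m * n)" "X' ! w \<in> carrier_mat (m' * n) (m' * n)"
      using w d by (simp_all add: nth_mem_carrier_mat[OF X] nth_mem_carrier_mat[OF X'])
    have W: "word_eval m n as bs ws X \<in> carrier_mat (m * n) (m * n)"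
      "word_eval m' n as bs ws X' \<in> carrier_mat (m' * n) (m' * n)"
      using ws d by (simp_all add: word_eval_carrier[OF X] word_eval_carrier[OF X'])
    have "word_eval (m + m') n a b (w # ws) (tuple_dsum (m * n) (m' * n) X X')
        = mat_dsum (blockE m n x y) (blockE m' n x y) (m * n) (m' * n)
          * mat_dsum (X ! w) (X' ! w) (m * n) (m' * n)
          * mat_dsum (word_eval m n as bs ws X) (word_eval m' n as bs ws X') (m * n) (m' * n)"
      using 1 Cons.IH[OF ws] w by (simp add: blockE_add)
    also have "\<dots> = mat_dsum (blockE m n x y * X ! w * word_eval m n as bs ws X)
        (blockE m' n x y * X' ! w * word_eval m' n as bs ws X') (m * n) (m' * n)"
      using Xw W mult_carrier_mat[OF blockE_carrier Xw(1)] mult_carrier_mat[OF blockE_carrier Xw(2)]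
      by (simp only: mult_mat_dsum blockE_carrier)
    finally show ?thesis using 1 by simp
  next
    case 2
    then show ?thesis by (auto simp: zero_mat_dsum distrib_right)
  qed
qed

lemma hom_part_tuple_dsum:
  assumes d: "length X = d" "length X' = d"
    and X: "set X \<subseteq> carrier_mat (m * n) (m * n)" and X': "set X' \<subseteq> carrier_mat (m' * n) (m' * n)"
    and i: "i < m * n + m' * n" and j: "j < m * n + m' * n"
  shows "hom_part (m + m') n d fhat (tuple_dsum (m * n) (m' * n) X X') l i j =
    (if i < m * n \<and> j < m * n then hom_part m n d fhat X l i j
     else if m * n \<le> i \<and> m * n \<le> j then hom_part m' n d fhat X' l (i - m * n) (j - m * n)
     else 0)"
proof -
  have entry: "word_eval (m + m') n a b w (tuple_dsum (m * n) (m' * n) X X') $$ (i, j) =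
    (if i < m * n \<and> j < m * n then word_eval m n a b w X $$ (i, j)
     else if m * n \<le> i \<and> m * n \<le> j then word_eval m' n a b w X' $$ (i - m * n, j - m * n)
     else 0)"
    if "(a, b, w) \<in> level_index n d l" for a b w
  proof -
    have w: "set w \<subseteq> {..<length X}" using level_index_letters[OF that] d by simp
    have "word_eval m n a b w X \<in> carrier_mat (m * n) (m * n)"
      "word_eval m' n a b w X' \<in> carrier_mat (m' * n) (m' * n)"
      using w d by (simp_all add: word_eval_carrier[OF X] word_eval_carrier[OF X'])
    then show ?thesis
      using i j by (auto simp: word_eval_tuple_dsum[OF _ X X' w] d)
  qed
  consider "i < m * n" "j < m * n" | "m * n \<le> i" "m * n \<le> j"
    | "\<not> (i < m * n \<and> j < m * n)" "\<not> (m * n \<le> i \<and> m * n \<le> j)"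
    by linarith
  then show ?thesis
    unfolding hom_part_def by cases (auto simp: entry intro!: sum.cong sum.neutral)
qed

lemma ev_carrier: "ev m n d fhat X \<in> carrier_mat (m * n) (m * n)"
  unfolding ev_def by simp

lemma ev_tuple_dsum:
  assumes "length X = d" and "length X' = d"
    and "set X \<subseteq> carrier_mat (m * n) (m * n)" and "set X' \<subseteq> carrier_mat (m' * n) (m' * n)"
  shows "ev (m + m') n d fhat (tuple_dsum (m * n) (m' * n) X X')
      = mat_dsum (ev m n d fhat X) (ev m' n d fhat X') (m * n) (m' * n)"
proof (rule eq_matI)
  fix i j
  assume "i < dim_row (mat_dsum (ev m n d fhat X) (ev m' n d fhat X') (m * n) (m' * n))"
    and "j < dim_col (mat_dsum (ev m n d fhat X) (ev m' n d fhat X') (m * n) (m' * n))"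
  then have i: "i < m * n + m' * n" and j: "j < m * n + m' * n" by (simp_all add: ev_def)
  then show "ev (m + m') n d fhat (tuple_dsum (m * n) (m' * n) X X') $$ (i, j)
      = mat_dsum (ev m n d fhat X) (ev m' n d fhat X') (m * n) (m' * n) $$ (i, j)"
    by (simp add: ev_def hom_part_tuple_dsum[OF assms i j] distrib_right)
qed (simp_all add: ev_def distrib_right)

lemma col_norm_tuple_dsum_le:
  assumes d: "length X' = length X" and X: "set X \<subseteq> carrier_mat N N" and X': "set X' \<subseteq> carrier_mat N' N'"
  shows "col_norm (N + N') (tuple_dsum N N' X X') \<le> max (col_norm N X) (col_norm N' X')"
proof (rule col_norm_le)
  let ?M = "max (col_norm N X) (col_norm N' X')"
  have M: "?M \<ge> 0" using col_norm_nonneg[OF X] by simp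
  fix v assume v: "v \<in> carrier_vec (N + N')" and "vec_sq_norm (N + N') v \<le> 1"
  define v1 v2 where "v1 = vec_first v N" and "v2 = vec_last v N'"
  have v1: "v1 \<in> carrier_vec N" and v2: "v2 \<in> carrier_vec N'" and v12: "v = v1 @\<^sub>v v2"
    using v by (simp_all add: v1_def v2_def)
  have "vec_sq_norm (N + N') (tuple_dsum N N' X X' ! k *\<^sub>v v)
      = vec_sq_norm N (X ! k *\<^sub>v v1) + vec_sq_norm N' (X' ! k *\<^sub>v v2)"
    if "k < length X" for k
    using that d nth_mem_carrier_mat[OF X, of k] nth_mem_carrier_mat[OF X', of k] v1 v2
    by (simp add: v12 mult_mat_vec_split vec_sq_norm_append)
  then have "(\<Sum>k<length (tuple_dsum N N' X X'). vec_sq_norm (N + N') (tuple_dsum N N' X X' ! k *\<^sub>v v))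
      = (\<Sum>k<length X. vec_sq_norm N (X ! k *\<^sub>v v1)) + (\<Sum>k<length X'. vec_sq_norm N' (X' ! k *\<^sub>v v2))"
    using d by (simp add: sum.distrib)
  also have "\<dots> \<le> (col_norm N X)\<^sup>2 * vec_sq_norm N v1 + (col_norm N' X')\<^sup>2 * vec_sq_norm N' v2"
    by (intro add_mono sum_vec_sq_norm_mult_vec_le X X' v1 v2)
  also have "\<dots> \<le> ?M\<^sup>2 * vec_sq_norm N v1 + ?M\<^sup>2 * vec_sq_norm N' v2"
    using col_norm_nonneg[OF X] col_norm_nonneg[OF X']
    by (intro add_mono mult_right_mono power_mono vec_sq_norm_nonneg) auto
  also have "\<dots> = ?M\<^sup>2 * vec_sq_norm (N + N') v"
    by (simp add: v12 vec_sq_norm_append[OF v1 v2] distrib_left)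
  also have "\<dots> \<le> ?M\<^sup>2"
    using \<open>vec_sq_norm (N + N') v \<le> 1\<close> by (simp add: mult_left_le)
  finally show "sqrt (\<Sum>k<length (tuple_dsum N N' X X'). vec_sq_norm (N + N') (tuple_dsum N N' X X' ! k *\<^sub>v v))
      \<le> ?M"
    by (rule real_le_lsqrt[OF M])
qed

lemma dom_level_iff:
  "X \<in> dom_level m n d \<longleftrightarrow>
     length X = d \<and> set X \<subseteq> carrier_mat (m * n) (m * n) \<and> col_norm (m * n) X < 1 / sqrt n"
  by (auto simp: dom_level_def subset_eq all_set_conv_all_nth)

lemma dom_levelD:
  assumes "X \<in> dom_level m n d"
  shows "length X = d" and "set X \<subseteq> carrier_mat (m * n) (m * n)"
    and "col_norm (m * n) X < 1 / sqrt n"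
  using assms by (simp_all add: dom_level_iff)

lemma tuple_dsum_in_dom_level:
  assumes "X \<in> dom_level m n d" and "X' \<in> dom_level m' n d"
  shows "tuple_dsum (m * n) (m' * n) X X' \<in> dom_level (m + m') n d"
proof -
  note X = dom_levelD[OF assms(1)] and X' = dom_levelD[OF assms(2)]
  have "col_norm ((m + m') * n) (tuple_dsum (m * n) (m' * n) X X')
      \<le> max (col_norm (m * n) X) (col_norm (m' * n) X')"
    using col_norm_tuple_dsum_le[OF _ X(2) X'(2)] X(1) X'(1) by (simp add: distrib_right)
  also have "\<dots> < 1 / sqrt n" using X(3) X'(3) by simp
  finally show ?thesis
    using set_tuple_dsum_carrier[OF _ X(2) X'(2)] X(1) X'(1)
    by (simp add: dom_level_iff distrib_right)
qed

theorem mainTheorem9: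
  fixes n d :: nat and fhat :: "nat list \<Rightarrow> nat list \<Rightarrow> nat list \<Rightarrow> complex"
  assumes "n \<ge> 1" and "d \<ge> 1" and "in_fock n d fhat"
  shows "(\<forall>m\<ge>1. \<forall>X\<in>dom_level m n d.
            (\<forall>i<m * n. \<forall>j<m * n. summable (\<lambda>l. hom_part m n d fhat X l i j))
            \<and> ev m n d fhat X \<in> carrier_mat (m * n) (m * n))
       \<and> (\<forall>m\<ge>1. \<forall>m'\<ge>1. \<forall>X\<in>dom_level m n d. \<forall>X'\<in>dom_level m' n d.
            tuple_dsum (m * n) (m' * n) X X' \<in> dom_level (m + m') n d
            \<and> ev (m + m') n d fhat (tuple_dsum (m * n) (m' * n) X X')
                = four_block_mat (ev m n d fhat X) (0\<^sub>m (m * n) (m' * n))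
                                 (0\<^sub>m (m' * n) (m * n)) (ev m' n d fhat X'))"
proof (intro conjI allI impI ballI)
  fix m X i j
  assume X: "X \<in> dom_level m n d" and i: "i < m * n" and j: "j < m * n"
  show "summable (\<lambda>l. hom_part m n d fhat X l i j)"
    by (rule summable_hom_part[OF assms(3) dom_levelD[OF X] i j])
next
  fix m X
  show "ev m n d fhat X \<in> carrier_mat (m * n) (m * n)" by (rule ev_carrier)
next
  fix m m' X X'
  assume X: "X \<in> dom_level m n d" and X': "X' \<in> dom_level m' n d"
  then show "tuple_dsum (m * n) (m' * n) X X' \<in> dom_level (m + m') n d"
    by (rule tuple_dsum_in_dom_level)
  show "ev (m + m') n d fhat (tuple_dsum (m * n) (m' * n) X X')
      = mat_dsum (ev m n d fhat X) (ev m' n d fhat X') (m * n) (m' * n)"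
    using ev_tuple_dsum[OF dom_levelD(1)[OF X] dom_levelD(1)[OF X'] dom_levelD(2)[OF X]
        dom_levelD(2)[OF X']] .
qed

end
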